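(* Let $k \geq \ell \geq 2$, $k \geq 3$ and $n > k+\ell$. Then $g(n,k,\ell) < h(n,k,\ell)$, where $$g(n,k,\ell) = \sum_{2 \leq i \leq \ell+1} \binom{\ell+1}{i}\binom{n-\ell-1}{k-i} + \binom{\ell+1}{\ell},\qquad h(n,k,\ell) = \binom{n}{k} - 2\binom{n-\ell}{k} + \binom{n-2\ell}{k} + 2.$$
   Context: Binomial coefficients $\binom{a}{b}$ are $0$ when $b<0$ or $b>a$. *)

theory Defs
  imports Main
begin

definition ibinom :: "int \<Rightarrow> int \<Rightarrow> int" where
  "ibinom a b = (if b < 0 \<or> b > a then 0 else int (nat a choose nat b))"

definition g_fun :: "int \<Rightarrow> int \<Rightarrow> int \<Rightarrow> int" where
  "g_fun n k l = (\<Sum>i\<in>{2..l+1}. ibinom (l+1) i * ibinom (n-l-1) (k-i)) + ibinom (l+1) l"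

definition h_fun :: "int \<Rightarrow> int \<Rightarrow> int \<Rightarrow> int" where
  "h_fun n k l = ibinom n k - 2 * ibinom (n-l) k + ibinom (n-2*l) k + 2"

end

theory Submission
  imports Defs
begin

text \<open>Put m = n - l. Vandermonde's identity applied to C(n,k) = C((l+1) + (m-1), k) shows that
g is C(n,k) with the summands for i = 0, 1 removed, so by Pascal's rule and the telescoping
C(m,k) = C(m-l,k) + \<Sum>j=1..l C(m-j,k-1) the difference h - g equals
\<Sum>j=2..l (C(m-1,k-1) - C(m-j,k-1) - 1). Every summand is positive, because
C(m-1,k-1) - C(m-j,k-1) \<ge> C(m-2,k-2) \<ge> k-1 \<ge> 2 for j \<ge> 2.\<close>

lemma ibinom_of_nat [simp]: "ibinom (int a) (int b) = int (a choose b)"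
  by (auto simp: ibinom_def binomial_eq_0)

lemma ibinom_of_nat_diff:
  "ibinom (int a) (int K - int i) = (if i \<le> K then int (a choose (K - i)) else 0)"
  by (auto simp: ibinom_def binomial_eq_0 of_nat_diff nat_diff_distrib)

lemma vandermonde_truncated:
  "(\<Sum>i\<in>{0..M}. (M choose i) * (if i \<le> K then a choose (K - i) else 0)) = (M + a) choose K"
proof -
  have "(\<Sum>i\<in>{0..M}. (M choose i) * (if i \<le> K then a choose (K - i) else 0))
      = (\<Sum>i\<in>{0..M + K}. (M choose i) * (if i \<le> K then a choose (K - i) else 0))"
    by (rule sum.mono_neutral_left) (auto simp: binomial_eq_0)
  also have "\<dots> = (\<Sum>i\<le>K. (M choose i) * (a choose (K - i)))"
    by (rule sum.mono_neutral_cong_right) auto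
  also have "\<dots> = (M + a) choose K"
    by (rule vandermonde)
  finally show ?thesis .
qed

lemma vandermonde_ibinom:
  "(\<Sum>i\<in>{0..int M}. ibinom (int M) i * ibinom (int a) (int K - i)) = int ((M + a) choose K)"
proof -
  have "{0..int M} = int ` {0..M}"
    by (simp add: image_int_atLeastAtMost)
  then have "(\<Sum>i\<in>{0..int M}. ibinom (int M) i * ibinom (int a) (int K - i))
      = (\<Sum>i\<in>{0..M}. ibinom (int M) (int i) * ibinom (int a) (int K - int i))"
    by (simp add: sum.reindex)
  also have "\<dots> = int (\<Sum>i\<in>{0..M}. (M choose i) * (if i \<le> K then a choose (K - i) else 0))"
    by (auto simp: ibinom_of_nat_diff intro!: sum.cong)
  also have "\<dots> = int ((M + a) choose K)"
    by (simp add: vandermonde_truncated)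
  finally show ?thesis .
qed

lemma g_fun_of_nat:
  assumes "L < N" and "1 \<le> K"
  shows "g_fun (int N) (int K) (int L)
    = int (N choose K) - int ((N - L - 1) choose K)
      - int (L + 1) * int ((N - L - 1) choose (K - 1)) + int L + 1"
proof -
  define t where "t i = ibinom (int L + 1) i * ibinom (int N - int L - 1) (int K - i)" for i
  have a: "int N - int L - 1 = int (N - L - 1)"
    using assms(1) by simp
  have "{0..int L + 1} = {0, 1} \<union> {2..int L + 1}"
    by auto
  then have "sum t {0..int L + 1} = t 0 + t 1 + sum t {2..int L + 1}"
    by (simp add: sum.union_disjoint)
  moreover have "sum t {0..int L + 1} = int (N choose K)"
    using vandermonde_ibinom[of "L + 1" "N - L - 1" K] assms(1) by (simp add: t_def a add.commute)
  moreover have "t 0 = int ((N - L - 1) choose K)"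
    using ibinom_of_nat[of "L + 1" 0] by (simp add: t_def a add.commute)
  moreover have "t 1 = int (L + 1) * int ((N - L - 1) choose (K - 1))"
    using ibinom_of_nat_diff[of "N - L - 1" K 1] ibinom_of_nat[of "L + 1" 1] assms(2)
    by (simp add: t_def a add.commute)
  moreover have "ibinom (int L + 1) (int L) = int L + 1"
    using ibinom_of_nat[of "L + 1" L] by (simp add: add.commute)
  ultimately show ?thesis
    by (simp add: g_fun_def t_def)
qed

lemma h_fun_of_nat:
  assumes "2 * L \<le> N"
  shows "h_fun (int N) (int K) (int L)
    = int (N choose K) - 2 * int ((N - L) choose K) + int ((N - L - L) choose K) + 2"
proof -
  have diff: "int N - int L = int (N - L)" "int N - 2 * int L = int (N - L - L)"
    using assms by auto
  show ?thesis
    unfolding h_fun_def diff by (simp only: ibinom_of_nat)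
qed

lemma choose_telescope:
  assumes "L \<le> m"
  shows "m choose Suc r = ((m - L) choose Suc r) + (\<Sum>j\<in>{1..L}. (m - j) choose r)"
  using assms
proof (induction L)
  case 0
  then show ?case by simp
next
  case (Suc L)
  have "m - L = Suc (m - Suc L)"
    using Suc.prems by simp
  then have "(m - L) choose Suc r = ((m - Suc L) choose Suc r) + ((m - Suc L) choose r)"
    by simp
  then show ?case
    using Suc by simp
qed

lemma choose_shift_gap:
  assumes "2 \<le> j" and "Suc r + 2 \<le> m"
  shows "((m - j) choose Suc r) + Suc r \<le> (m - 1) choose Suc r"
proof -
  have "(m - j) choose Suc r \<le> (m - 2) choose Suc r"
    using assms(1) by (intro binomial_right_mono) simp
  moreover have "Suc r \<le> (m - 2) choose r"
    using binomial_right_mono[of "Suc r" "m - 2" r] assms(2) by simp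
  moreover have "m - 1 = Suc (m - 2)"
    using assms(2) by simp
  then have "(m - 1) choose Suc r = ((m - 2) choose Suc r) + ((m - 2) choose r)"
    by simp
  ultimately show ?thesis
    by linarith
qed

lemma sum_choose_shift_bound:
  assumes "Suc r + 2 \<le> m"
  shows "(\<Sum>j\<in>{2..L}. (m - j) choose Suc r) + (L - 1) * Suc r \<le> (L - 1) * ((m - 1) choose Suc r)"
proof -
  have "(\<Sum>j\<in>{2..L}. (m - j) choose Suc r) + (L - 1) * Suc r
      = (\<Sum>j\<in>{2..L}. ((m - j) choose Suc r) + Suc r)"
    by (simp only: sum.distrib sum_constant card_atLeastAtMost) (simp add: mult.commute)
  also have "\<dots> \<le> (\<Sum>j\<in>{2..L}. (m - 1) choose Suc r)"
    using assms by (intro sum_mono choose_shift_gap) auto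
  also have "\<dots> = (L - 1) * ((m - 1) choose Suc r)"
    by simp
  finally show ?thesis .
qed

lemma choose_telescope_gap:
  assumes "1 \<le> L" and "L \<le> m" and "Suc r + 2 \<le> m"
  shows "(m choose Suc (Suc r)) + (L - 1) * Suc r
    \<le> L * ((m - 1) choose Suc r) + ((m - L) choose Suc (Suc r))"
proof -
  define S where "S = (\<Sum>j\<in>{2..L}. (m - j) choose Suc r)"
  have "{1..L} = insert 1 {2..L}"
    using assms(1) by auto
  then have "m choose Suc (Suc r) = ((m - L) choose Suc (Suc r)) + ((m - 1) choose Suc r) + S"
    using choose_telescope[of L m "Suc r"] assms(2) by (simp add: S_def)
  moreover have "S + (L - 1) * Suc r \<le> (L - 1) * ((m - 1) choose Suc r)"
    unfolding S_def using assms(3) by (rule sum_choose_shift_bound)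
  moreover have "L * ((m - 1) choose Suc r) = (L - 1) * ((m - 1) choose Suc r) + ((m - 1) choose Suc r)"
    using assms(1) by (simp add: mult_eq_if)
  ultimately show ?thesis
    by linarith
qed

theorem proposition4p2:
  fixes n k l :: int
  assumes "k \<ge> l" and "l \<ge> 2" and "k \<ge> 3" and "n > k + l"
  shows "g_fun n k l < h_fun n k l"
proof -
  have "0 \<le> n" "0 \<le> k" "0 \<le> l"
    using assms by linarith+
  then obtain N K L where NKL: "n = int N" "k = int K" "l = int L"
    by (metis nonneg_int_cases)
  define r where "r = K - 2"
  define m where "m = N - L"
  have K: "K = Suc (Suc r)" and r: "1 \<le> r" and L: "2 \<le> L" "L \<le> K" "K + L < N"
    using assms by (auto simp: NKL r_def)
  have g: "g_fun n k l = int (N choose K) - int ((m - 1) choose K)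
      - (int L + 1) * int ((m - 1) choose Suc r) + int L + 1"
    using g_fun_of_nat[of L N K] L by (simp add: NKL K m_def)
  have h: "h_fun n k l = int (N choose K) - 2 * int (m choose K) + int ((m - L) choose K) + 2"
    using h_fun_of_nat[of L N K] L by (simp add: NKL m_def)
  have "Suc (m - 1) = m"
    using L by (simp add: m_def)
  then have pascal: "m choose K = ((m - 1) choose K) + ((m - 1) choose Suc r)"
    using binomial_Suc_Suc[of "m - 1" "Suc r"] by (simp only: K)
  have "(m choose K) + (L - 1) * Suc r \<le> L * ((m - 1) choose Suc r) + ((m - L) choose K)"
    unfolding K using L by (intro choose_telescope_gap) (simp_all add: K m_def)
  moreover have "(L - 1) * 2 \<le> (L - 1) * Suc r"
    using r by simp
  ultimately have "(m choose K) + L \<le> L * ((m - 1) choose Suc r) + ((m - L) choose K)"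
    using L by linarith
  then have "int (m choose K) + int L \<le> int L * int ((m - 1) choose Suc r) + int ((m - L) choose K)"
    by (simp only: of_nat_add [symmetric] of_nat_mult [symmetric] of_nat_le_iff)
  then show ?thesis
    unfolding g h using arg_cong[OF pascal, of int] by (simp add: algebra_simps)
qed

end
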